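(* Let $\{X_s\}_{s\in\mathbb N_0}$ be a sequence of Banach spaces satisfying (F1)–(F3), $\{\Theta_s\}_{s\in\mathbb N_0}$ a sequence of $\lambda_s$–$BK$-spaces satisfying (F1)–(F3), and $\{g_i\}_{i=1}^\infty$ a pre-$F$-frame for $X_F$ with respect to $\Theta_F$, with $U:X_F\to\Theta_F$, $Uf=\{g_i(f)\}_{i=1}^\infty$. Then $\{g_i\}$ is an $F$-frame for $X_F$ with respect to $\Theta_F$ if and only if there exists an $F$-bounded projection $\mathcal P$ (linear, $\mathcal P^2=\mathcal P$) from $\Theta_F$ onto $R(U)$.
   Context: Conditions (F1)–(F3) for a sequence $\{Y_s,|\cdot|_s\}_{s\in\mathbb N_0}$ of separable Banach spaces: (F1) $\{0\}\neq\bigcap_{s}Y_s\subseteq\dots\subseteq Y_1\subseteq Y_0$; (F2) $|\cdot|_0\le|\cdot|_1\le\dots$; (F3) $Y_F:=\bigcap_s Y_s$ is dense in each $Y_s$. $X_F=\bigcap_sX_s$, $\Theta_F=\bigcap_s\Theta_s$. $BK$-space: Banach sequence space with continuous coordinate functionals. $\lambda$–$BK$-space: $BK$-space containing all canonical vectors $e_i$ with $|||\sum_{i=1}^nc_ie_i|||\le\lambda|||\{c_i\}|||$ for all $n$. Pre-$F$-frame: $\{g_i\}\in(X_F^* )^{\mathbb N}$ with $\{g_i(f)\}\in\Theta_F$ for $f\in X_F$ and, for each $s$, constants $0<A_s\le B_s<\infty$ with $A_s\|f\|_s\le|||\{g_i(f)\}|||_s\le B_s\|f\|_s$, $f\in X_F$.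 $F$-frame: a pre-$F$-frame for which there is an $F$-bounded operator $V:\Theta_F\to X_F$ with $V(\{g_i(f)\})=f$ for all $f\in X_F$. An operator between these spaces is $F$-bounded if for each $s$ there is $K_s$ with $\|Vc\|_s\le K_s|||c|||_s$ (norm estimates in the $s$-th norms of domain and target). *)

theory Defs
  imports "HOL-Analysis.Analysis" "HOL-Library.Function_Algebras"
begin

instantiation "fun" :: (type, real_vector) real_vector
begin
definition scaleR_fun :: "real \<Rightarrow> ('a \<Rightarrow> 'b) \<Rightarrow> 'a \<Rightarrow> 'b" where
  "scaleR_fun a f = (\<lambda>x. a *\<^sub>R f x)"
instance
  by standard (auto simp: scaleR_fun_def fun_eq_iff scaleR_add_right scaleR_add_left)
end

definition linear_on :: "'a::real_vector set \<Rightarrow> ('a \<Rightarrow> 'b::real_vector) \<Rightarrow> bool" where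
  "linear_on V T \<longleftrightarrow>
     (\<forall>x\<in>V. \<forall>y\<in>V. \<forall>a b. T (a *\<^sub>R x + b *\<^sub>R y) = a *\<^sub>R T x + b *\<^sub>R T y)"

definition is_norm_on :: "'a::real_vector set \<Rightarrow> ('a \<Rightarrow> real) \<Rightarrow> bool" where
  "is_norm_on V N \<longleftrightarrow>
     (\<forall>x\<in>V. 0 \<le> N x) \<and> (\<forall>x\<in>V. N x = 0 \<longleftrightarrow> x = 0) \<and>
     (\<forall>x\<in>V. \<forall>a. N (a *\<^sub>R x) = \<bar>a\<bar> * N x) \<and>
     (\<forall>x\<in>V. \<forall>y\<in>V. N (x + y) \<le> N x + N y)"

definition sep_banach :: "'a::real_vector set \<Rightarrow> ('a \<Rightarrow> real) \<Rightarrow> bool" where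
  "sep_banach V N \<longleftrightarrow>
     subspace V \<and> is_norm_on V N \<and>
     (\<forall>u. (\<forall>n. u n \<in> V) \<and> (\<forall>e>0. \<exists>M. \<forall>m\<ge>M. \<forall>n\<ge>M. N (u m - u n) < e)
          \<longrightarrow> (\<exists>x\<in>V. (\<lambda>n. N (u n - x)) \<longlonglongrightarrow> 0)) \<and>
     (\<exists>D\<subseteq>V. countable D \<and> (\<forall>x\<in>V. \<forall>e>0. \<exists>d\<in>D. N (x - d) < e))"

definition Fint :: "(nat \<Rightarrow> 'a set) \<Rightarrow> 'a set" where
  "Fint Y = (\<Inter>s. Y s)"

definition F_seq :: "(nat \<Rightarrow> 'a::real_vector set) \<Rightarrow> (nat \<Rightarrow> 'a \<Rightarrow> real) \<Rightarrow> bool" where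
  "F_seq Y N \<longleftrightarrow>
     (\<forall>s. sep_banach (Y s) (N s)) \<and>
     Fint Y \<noteq> {0} \<and> (\<forall>s. Y (Suc s) \<subseteq> Y s) \<and>
     (\<forall>s. \<forall>y\<in>Y (Suc s). N s y \<le> N (Suc s) y) \<and>
     (\<forall>s. \<forall>y\<in>Y s. \<forall>e>0. \<exists>z\<in>Fint Y. N s (y - z) < e)"

definition canon :: "nat \<Rightarrow> nat \<Rightarrow> real" where
  "canon i = (\<lambda>j. if j = i then 1 else 0)"

definition BK_space :: "(nat \<Rightarrow> real) set \<Rightarrow> ((nat \<Rightarrow> real) \<Rightarrow> real) \<Rightarrow> bool" where
  "BK_space T N \<longleftrightarrow> sep_banach T N \<and>
     (\<forall>i. \<exists>C. \<forall>c\<in>T. \<bar>c i\<bar> \<le> C * N c)"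

(* lambda-BK-space; sequences indexed from 0, so sum over i <= n corresponds to 1..n+1 *)
definition lambda_BK :: "(nat \<Rightarrow> real) set \<Rightarrow> ((nat \<Rightarrow> real) \<Rightarrow> real) \<Rightarrow> real \<Rightarrow> bool" where
  "lambda_BK T N lam \<longleftrightarrow> BK_space T N \<and> (\<forall>i. canon i \<in> T) \<and>
     (\<forall>c\<in>T. \<forall>n. N (\<Sum>i\<le>n. c i *\<^sub>R canon i) \<le> lam * N c)"

(* element of X_F^* : linear on X_F and continuous for the Frechet topology *)
definition F_dual :: "(nat \<Rightarrow> 'a::real_vector set) \<Rightarrow> (nat \<Rightarrow> 'a \<Rightarrow> real) \<Rightarrow> ('a \<Rightarrow> real) \<Rightarrow> bool" where
  "F_dual X N g \<longleftrightarrow> linear_on (Fint X) g \<and>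
     (\<exists>s C. \<forall>f\<in>Fint X. \<bar>g f\<bar> \<le> C * N s f)"

definition F_bounded ::
  "(nat \<Rightarrow> 'a::real_vector set) \<Rightarrow> (nat \<Rightarrow> 'a \<Rightarrow> real) \<Rightarrow> (nat \<Rightarrow> 'b \<Rightarrow> real) \<Rightarrow> ('a \<Rightarrow> 'b) \<Rightarrow> bool" where
  "F_bounded A NA NB V \<longleftrightarrow> (\<forall>s. \<exists>K. \<forall>c\<in>Fint A. NB s (V c) \<le> K * NA s c)"

definition U_op :: "(nat \<Rightarrow> 'a \<Rightarrow> real) \<Rightarrow> 'a \<Rightarrow> nat \<Rightarrow> real" where
  "U_op g f = (\<lambda>i. g i f)"

definition pre_F_frame ::
  "(nat \<Rightarrow> 'a::real_vector set) \<Rightarrow> (nat \<Rightarrow> 'a \<Rightarrow> real) \<Rightarrow>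
   (nat \<Rightarrow> (nat \<Rightarrow> real) set) \<Rightarrow> (nat \<Rightarrow> (nat \<Rightarrow> real) \<Rightarrow> real) \<Rightarrow>
   (nat \<Rightarrow> 'a \<Rightarrow> real) \<Rightarrow> bool" where
  "pre_F_frame X NX T NT g \<longleftrightarrow>
     (\<forall>i. F_dual X NX (g i)) \<and>
     (\<forall>f\<in>Fint X. U_op g f \<in> Fint T) \<and>
     (\<forall>s. \<exists>A B. 0 < A \<and> A \<le> B \<and>
        (\<forall>f\<in>Fint X. A * NX s f \<le> NT s (U_op g f) \<and> NT s (U_op g f) \<le> B * NX s f))"

definition F_frame ::
  "(nat \<Rightarrow> 'a::real_vector set) \<Rightarrow> (nat \<Rightarrow> 'a \<Rightarrow> real) \<Rightarrow>
   (nat \<Rightarrow> (nat \<Rightarrow> real) set) \<Rightarrow> (nat \<Rightarrow> (nat \<Rightarrow> real) \<Rightarrow> real) \<Rightarrow>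
   (nat \<Rightarrow> 'a \<Rightarrow> real) \<Rightarrow> bool" where
  "F_frame X NX T NT g \<longleftrightarrow> pre_F_frame X NX T NT g \<and>
     (\<exists>V. linear_on (Fint T) V \<and> V ` Fint T \<subseteq> Fint X \<and> F_bounded T NT NX V \<and>
          (\<forall>f\<in>Fint X. V (U_op g f) = f))"

end

theory Submission
  imports Defs
begin

(* The lower frame bound makes U injective on X_F, and the upper bound makes it
   F-bounded.
   (=>) If V is an F-bounded linear reconstruction operator (V o U = id on X_F),
        then P = U o V is linear, idempotent, has range R(U) and is F-bounded as a
        composition of F-bounded maps.
   (<=) If P is an F-bounded projection onto R(U), put V = U^{-1} o P, where U^{-1}
        is the inverse of U on its range.  V is linear because the inverse of an
        injective linear map is linear, V o U = id because P fixes R(U), and V is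
        F-bounded because the lower frame bound bounds U^{-1} on R(U). *)

lemma F_seq_norm_on:
  assumes "F_seq Y N" shows "subspace (Y s)" "is_norm_on (Y s) (N s)"
  using assms unfolding F_seq_def sep_banach_def by auto

lemma Fint_subspace:
  assumes "F_seq Y N" shows "subspace (Fint Y)"
  using F_seq_norm_on(1)[OF assms] unfolding Fint_def subspace_def by auto

lemma Fint_memD: "x \<in> Fint Y \<Longrightarrow> x \<in> Y s"
  by (auto simp: Fint_def)

lemma F_seq_norm_nonneg:
  assumes "F_seq Y N" "x \<in> Fint Y" shows "0 \<le> N s x"
  using F_seq_norm_on(2)[OF assms(1)] Fint_memD[OF assms(2)] by (auto simp: is_norm_on_def)

lemma F_seq_norm_zero:
  assumes "F_seq Y N" shows "N s 0 = 0"
  using F_seq_norm_on[OF assms, of s] by (auto simp: is_norm_on_def subspace_def)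

lemma F_seq_norm_eq_0D:
  assumes "F_seq Y N" "x \<in> Fint Y" "N s x \<le> 0" shows "x = 0"
  using F_seq_norm_on(2)[OF assms(1), of s] Fint_memD[OF assms(2)] assms(3)
  unfolding is_norm_on_def by (metis order_antisym)

lemma linear_on_comp:
  assumes "linear_on A V" "V ` A \<subseteq> B" "linear_on B W"
  shows "linear_on A (\<lambda>c. W (V c))"
  using assms unfolding linear_on_def by (simp add: image_subset_iff)

lemma linear_on_inv_into:
  assumes "subspace S" "linear_on S U" "inj_on U S"
  shows "linear_on (U ` S) (inv_into S U)"
  unfolding linear_on_def
proof (intro ballI allI)
  fix y z a b assume y: "y \<in> U ` S" and z: "z \<in> U ` S"
  let ?x = "inv_into S U y" and ?w = "inv_into S U z"
  have xw: "?x \<in> S" "?w \<in> S" "U ?x = y" "U ?w = z"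
    using y z by (auto intro: inv_into_into f_inv_into_f)
  have "a *\<^sub>R ?x + b *\<^sub>R ?w \<in> S"
    using assms(1) xw by (simp add: subspace_add subspace_scale)
  moreover have "U (a *\<^sub>R ?x + b *\<^sub>R ?w) = a *\<^sub>R y + b *\<^sub>R z"
    using assms(2) xw unfolding linear_on_def by simp
  ultimately show "inv_into S U (a *\<^sub>R y + b *\<^sub>R z) = a *\<^sub>R ?x + b *\<^sub>R ?w"
    using assms(3) by (metis inv_into_f_f)
qed

text \<open>F-boundedness is stable under composition, provided the intermediate
  s-th norms are nonnegative (so that negative constants can be replaced by 0).\<close>
lemma F_bounded_comp:
  assumes V: "F_bounded A NA NB V" "V ` Fint A \<subseteq> Fint B"
    and W: "F_bounded B NB NC W"
    and nonneg: "\<And>s b. b \<in> Fint B \<Longrightarrow> 0 \<le> NB s b"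
  shows "F_bounded A NA NC (\<lambda>c. W (V c))"
  unfolding F_bounded_def
proof
  fix s
  obtain K1 where K1: "\<forall>c\<in>Fint A. NB s (V c) \<le> K1 * NA s c"
    using V(1) unfolding F_bounded_def by blast
  obtain K2 where K2: "\<forall>b\<in>Fint B. NC s (W b) \<le> K2 * NB s b"
    using W unfolding F_bounded_def by blast
  show "\<exists>K. \<forall>c\<in>Fint A. NC s (W (V c)) \<le> K * NA s c"
  proof (intro exI ballI)
    fix c assume c: "c \<in> Fint A"
    have Vc: "V c \<in> Fint B" using V(2) c by blast
    have "NC s (W (V c)) \<le> K2 * NB s (V c)" using K2 Vc by blast
    also have "\<dots> \<le> max K2 0 * NB s (V c)" using nonneg[OF Vc] by (intro mult_right_mono) auto
    also have "\<dots> \<le> max K2 0 * (K1 * NA s c)" using K1 c by (intro mult_left_mono) auto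
    finally show "NC s (W (V c)) \<le> (max K2 0 * K1) * NA s c" by simp
  qed
qed

lemma left_inverse_projection:
  assumes "V ` A \<subseteq> S" "U ` S \<subseteq> A" "\<forall>f\<in>S. V (U f) = f"
  shows "\<forall>c\<in>A. U (V (U (V c))) = U (V c)" "(\<lambda>c. U (V c)) ` A = U ` S"
  using assms by (auto simp: image_subset_iff image_iff) (metis)

lemma projection_left_inverse:
  assumes "inj_on U S" "\<forall>c\<in>A. P (P c) = P c" "P ` A = U ` S" "f \<in> S"
  shows "inv_into S U (P (U f)) = f"
proof -
  obtain c where "c \<in> A" "U f = P c" using assms(3,4) by (metis image_eqI imageE)
  hence "P (U f) = U f" using assms(2) by simp
  thus ?thesis using inv_into_f_f[OF assms(1,4)] by simp
qed

lemma U_op_linear_on: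
  assumes "\<forall>i. F_dual X NX (g i)" shows "linear_on (Fint X) (U_op g)"
  using assms unfolding F_dual_def linear_on_def U_op_def
  by (auto simp: fun_eq_iff scaleR_fun_def)

lemma pre_F_frame_U_bounded:
  assumes "pre_F_frame X NX T NT g" shows "F_bounded X NX NT (U_op g)"
  using assms unfolding pre_F_frame_def F_bounded_def by meson

text \<open>The lower frame bound (in the 0-th norm) makes U injective.\<close>
lemma pre_F_frame_U_inj:
  assumes X: "F_seq X NX" and T: "F_seq T NT" and frame: "pre_F_frame X NX T NT g"
  shows "inj_on (U_op g) (Fint X)"
proof (rule inj_onI)
  fix x y assume xy: "x \<in> Fint X" "y \<in> Fint X" "U_op g x = U_op g y"
  have d: "x - y \<in> Fint X" using Fint_subspace[OF X] xy by (simp add: subspace_diff)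
  have lin: "linear_on (Fint X) (U_op g)"
    using frame U_op_linear_on unfolding pre_F_frame_def by blast
  have "U_op g (x - y) = U_op g x - U_op g y"
    using lin xy unfolding linear_on_def by (metis scaleR_one scaleR_minus1_left diff_conv_add_uminus)
  hence U0: "U_op g (x - y) = 0" using xy(3) by simp
  obtain A where A: "0 < A" "\<forall>f\<in>Fint X. A * NX 0 f \<le> NT 0 (U_op g f)"
    using frame unfolding pre_F_frame_def by blast
  have "A * NX 0 (x - y) \<le> 0" using A(2) d U0 F_seq_norm_zero[OF T] by fastforce
  hence "NX 0 (x - y) \<le> 0" using A(1) by (simp add: mult_le_0_iff)
  thus "x = y" using F_seq_norm_eq_0D[OF X d] by simp
qed

text \<open>The lower frame bounds bound the inverse of U on its range: if U (V c) = P c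
  with P F-bounded, then V is F-bounded.\<close>
lemma pre_F_frame_inverse_bounded:
  assumes frame: "pre_F_frame X NX T NT g" and P: "F_bounded T NT NT P"
    and V: "\<And>c. c \<in> Fint T \<Longrightarrow> V c \<in> Fint X \<and> U_op g (V c) = P c"
  shows "F_bounded T NT NX V"
  unfolding F_bounded_def
proof
  fix s
  obtain K where K: "\<forall>c\<in>Fint T. NT s (P c) \<le> K * NT s c"
    using P unfolding F_bounded_def by blast
  obtain A where A: "0 < A" "\<forall>f\<in>Fint X. A * NX s f \<le> NT s (U_op g f)"
    using frame unfolding pre_F_frame_def by blast
  show "\<exists>K'. \<forall>c\<in>Fint T. NX s (V c) \<le> K' * NT s c"
  proof (intro exI ballI)
    fix c assume c: "c \<in> Fint T"
    have "A * NX s (V c) \<le> K * NT s c" using A(2) K V[OF c] c by fastforce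
    thus "NX s (V c) \<le> (K / A) * NT s c" using A(1) by (simp add: field_simps)
  qed
qed

text \<open>Necessity: a reconstruction operator V yields the F-bounded projection U o V.\<close>
lemma F_frame_projection:
  assumes X: "F_seq X NX" and frame: "F_frame X NX T NT g"
  shows "\<exists>P. linear_on (Fint T) P \<and> (\<forall>c\<in>Fint T. P (P c) = P c) \<and>
           P ` Fint T = U_op g ` Fint X \<and> F_bounded T NT NT P"
proof -
  have pre: "pre_F_frame X NX T NT g" using frame unfolding F_frame_def by blast
  have U_lin: "linear_on (Fint X) (U_op g)" and U_into: "U_op g ` Fint X \<subseteq> Fint T"
    using pre U_op_linear_on unfolding pre_F_frame_def by blast+
  obtain V where V: "linear_on (Fint T) V" "V ` Fint T \<subseteq> Fint X"
    "F_bounded T NT NX V" "\<forall>f\<in>Fint X. V (U_op g f) = f"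
    using frame unfolding F_frame_def by blast
  show ?thesis
    using linear_on_comp[OF V(1,2) U_lin] left_inverse_projection[OF V(2) U_into] V(4)
      F_bounded_comp[OF V(3,2) pre_F_frame_U_bounded[OF pre] F_seq_norm_nonneg[OF X]]
    by blast
qed

text \<open>Sufficiency: an F-bounded projection P onto R(U) yields the reconstruction
  operator U^{-1} o P.\<close>
lemma projection_F_frame:
  assumes X: "F_seq X NX" and T: "F_seq T NT" and pre: "pre_F_frame X NX T NT g"
    and P: "linear_on (Fint T) P" "\<forall>c\<in>Fint T. P (P c) = P c"
      "P ` Fint T = U_op g ` Fint X" "F_bounded T NT NT P"
  shows "F_frame X NX T NT g"
proof -
  let ?U = "U_op g"
  have U_lin: "linear_on (Fint X) ?U"
    using pre U_op_linear_on unfolding pre_F_frame_def by blast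
  note U_inj = pre_F_frame_U_inj[OF X T pre]
  define V where "V c = inv_into (Fint X) ?U (P c)" for c
  have V_props: "V c \<in> Fint X \<and> ?U (V c) = P c" if "c \<in> Fint T" for c
  proof -
    have "P c \<in> ?U ` Fint X" using P(3) that by blast
    thus ?thesis unfolding V_def by (simp add: inv_into_into f_inv_into_f)
  qed
  have U_inv_lin: "linear_on (?U ` Fint X) (inv_into (Fint X) ?U)"
    using linear_on_inv_into[OF Fint_subspace[OF X] U_lin U_inj] .
  have V_lin: "linear_on (Fint T) V"
    unfolding V_def using linear_on_comp[OF P(1) _ U_inv_lin] P(3) by blast
  have V_bnd: "F_bounded T NT NX V"
    using pre_F_frame_inverse_bounded[OF pre P(4) V_props] .
  have V_left_inv: "\<forall>f\<in>Fint X. V (?U f) = f"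
    unfolding V_def using projection_left_inverse[OF U_inj P(2,3)] by blast
  show ?thesis
    unfolding F_frame_def using pre V_lin V_props V_bnd V_left_inv by blast
qed

theorem mainTheorem2:
  fixes X :: "nat \<Rightarrow> 'a::real_vector set" and NX :: "nat \<Rightarrow> 'a \<Rightarrow> real"
    and T :: "nat \<Rightarrow> (nat \<Rightarrow> real) set" and NT :: "nat \<Rightarrow> (nat \<Rightarrow> real) \<Rightarrow> real"
    and lam :: "nat \<Rightarrow> real" and g :: "nat \<Rightarrow> 'a \<Rightarrow> real"
  assumes "F_seq X NX"
    and "F_seq T NT"
    and "\<forall>s. lambda_BK (T s) (NT s) (lam s)"
    and "pre_F_frame X NX T NT g"
  shows "F_frame X NX T NT g \<longleftrightarrow>
    (\<exists>P. linear_on (Fint T) P \<and> (\<forall>c\<in>Fint T. P (P c) = P c) \<and>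
         P ` Fint T = U_op g ` Fint X \<and> F_bounded T NT NT P)"
proof
  assume "F_frame X NX T NT g"
  then show "\<exists>P. linear_on (Fint T) P \<and> (\<forall>c\<in>Fint T. P (P c) = P c) \<and>
      P ` Fint T = U_op g ` Fint X \<and> F_bounded T NT NT P"
    by (rule F_frame_projection[OF assms(1)])
next
  assume "\<exists>P. linear_on (Fint T) P \<and> (\<forall>c\<in>Fint T. P (P c) = P c) \<and>
      P ` Fint T = U_op g ` Fint X \<and> F_bounded T NT NT P"
  then show "F_frame X NX T NT g"
    using projection_F_frame[OF assms(1,2,4)] by blast
qed

end
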